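(* Let $G=K\rtimes H$ be a Frobenius group with kernel $K$ and complement $H$, acting on $K$ by $\circ$, and suppose $|H|\neq|K|-1$. Then for any two distinct elements $u,v\in K$, $$|\{z\in K:\ z \text{ separates } u \text{ and } v\}|>|K|/2.$$
   Context: A Frobenius group is a finite group $G$ acting transitively on a finite set such that only the identity has more than one fixed point and some nontrivial element fixes a point; its kernel $K$ (identity plus fixed-point-free elements) is normal and a complement $H$ (a point stabilizer) satisfies $K\cap H=\{1\}$, $G=KH$. The action $\circ$ of $G$ on $K$: for $g=yh$ with $y\in K,h\in H$, $g\circ x=yhxh^{-1}$. For $u\neq v$ in $K$, $z\in K$ separates $u$ and $v$ if $v\circ z\notin H\circ(u\circ z)$, where $H\circ w=\{h\circ w:h\in H\}$. *)

theory Defs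
  imports Complex_Main "HOL-Algebra.Group_Action"
begin

definition frobenius_action :: "('a, 'c) monoid_scheme \<Rightarrow> 'b set \<Rightarrow> ('a \<Rightarrow> 'b \<Rightarrow> 'b) \<Rightarrow> bool" where
  "frobenius_action G E \<phi> \<longleftrightarrow>
     transitive_action G E \<phi> \<and> finite (carrier G) \<and> finite E \<and>
     (\<forall>g \<in> carrier G. g \<noteq> \<one>\<^bsub>G\<^esub> \<longrightarrow> card (invariants E \<phi> g) \<le> 1) \<and>
     (\<exists>g \<in> carrier G. g \<noteq> \<one>\<^bsub>G\<^esub> \<and> invariants E \<phi> g \<noteq> {})"

definition frobenius_kernel :: "('a, 'c) monoid_scheme \<Rightarrow> 'b set \<Rightarrow> ('a \<Rightarrow> 'b \<Rightarrow> 'b) \<Rightarrow> 'a set" where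
  "frobenius_kernel G E \<phi> = {\<one>\<^bsub>G\<^esub>} \<union> {g \<in> carrier G. invariants E \<phi> g = {}}"

definition frob_circ :: "('a, 'c) monoid_scheme \<Rightarrow> 'a set \<Rightarrow> 'a set \<Rightarrow> 'a \<Rightarrow> 'a \<Rightarrow> 'a" where
  "frob_circ G K H g x =
     (THE w. \<exists>y \<in> K. \<exists>h \<in> H. g = y \<otimes>\<^bsub>G\<^esub> h \<and> w = y \<otimes>\<^bsub>G\<^esub> h \<otimes>\<^bsub>G\<^esub> x \<otimes>\<^bsub>G\<^esub> inv\<^bsub>G\<^esub> h)"

definition separates :: "('a, 'c) monoid_scheme \<Rightarrow> 'a set \<Rightarrow> 'a set \<Rightarrow> 'a \<Rightarrow> 'a \<Rightarrow> 'a \<Rightarrow> bool" where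
  "separates G K H z u v \<longleftrightarrow>
     frob_circ G K H v z \<notin> (\<lambda>h. frob_circ G K H h (frob_circ G K H u z)) ` H"

end

theory Submission
  imports Defs
begin

(* Write u o z = u z for u, z in the kernel K and h o w = h w h^-1 for h in the complement H.
   An element z of K fails to separate u and v exactly when v z = h (u z) h^-1 for some h in H;
   since u ~= v this forces h ~= 1.  The Frobenius property says that a nontrivial element of H
   centralizes no nontrivial element of K.  Two consequences drive the count:
   (1) for a fixed h in H - {1} the equation v z = h (u z) h^-1 has at most one solution z in K,
       so at most |H| - 1 elements of K fail to separate u and v;
   (2) H acts freely by conjugation on K - {1}, so every orbit has |H| elements; if
       |H| ~= |K| - 1 there are at least two orbits, whence 2 |H| <= |K| - 1.
   Together: at least |K| - |H| + 1 > |K| / 2 elements of K separate u and v. *)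

lemma (in group) inv_mult_cancel_left [simp]:
  "x \<in> carrier G \<Longrightarrow> y \<in> carrier G \<Longrightarrow> inv x \<otimes> (x \<otimes> y) = y"
  by (simp add: m_assoc[symmetric])

lemma (in group) mult_inv_cancel_left [simp]:
  "x \<in> carrier G \<Longrightarrow> y \<in> carrier G \<Longrightarrow> x \<otimes> (inv x \<otimes> y) = y"
  by (simp add: m_assoc[symmetric])

locale semidirect_decomposition = group G + K: normal K G + H: subgroup H G
  for G (structure) and K H +
  assumes trivial_intersection: "K \<inter> H = {\<one>}"
begin

text \<open>A factorization \<open>g = y h\<close> with \<open>y \<in> K\<close>, \<open>h \<in> H\<close> is unique; this makes the
  action \<open>frob_circ\<close> well defined.\<close>
lemma factorization_unique:
  assumes y: "y \<in> K" "y' \<in> K" and h: "h \<in> H" "h' \<in> H" and eq: "y \<otimes> h = y' \<otimes> h'"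
  shows "y = y' \<and> h = h'"
proof -
  have c: "y \<in> carrier G" "y' \<in> carrier G" "h \<in> carrier G" "h' \<in> carrier G"
    using y h K.subset H.subset by auto
  have "inv y' \<otimes> y = inv y' \<otimes> (y \<otimes> h) \<otimes> inv h" by (simp add: c m_assoc)
  also have "\<dots> = h' \<otimes> inv h" by (simp add: eq c m_assoc[symmetric])
  finally have eq': "inv y' \<otimes> y = h' \<otimes> inv h" .
  have "inv y' \<otimes> y \<in> K" "h' \<otimes> inv h \<in> H" using y h by auto
  with eq' trivial_intersection have "inv y' \<otimes> y = \<one>" by auto
  then have "y = y'" using c by (metis inv_equality inv_inv inv_closed)
  with eq c show ?thesis by simp
qed

lemma frob_circ_factorized:
  assumes "y \<in> K" "h \<in> H"
  shows "frob_circ G K H (y \<otimes> h) x = y \<otimes> h \<otimes> x \<otimes> inv h"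
  unfolding frob_circ_def
proof (rule the_equality)
  show "\<exists>y'\<in>K. \<exists>h'\<in>H. y \<otimes> h = y' \<otimes> h' \<and> y \<otimes> h \<otimes> x \<otimes> inv h = y' \<otimes> h' \<otimes> x \<otimes> inv h'"
    using assms by blast
next
  fix w assume "\<exists>y'\<in>K. \<exists>h'\<in>H. y \<otimes> h = y' \<otimes> h' \<and> w = y' \<otimes> h' \<otimes> x \<otimes> inv h'"
  then show "w = y \<otimes> h \<otimes> x \<otimes> inv h" using factorization_unique[OF assms(1) _ assms(2)] by blast
qed

lemma frob_circ_kernel:
  assumes "y \<in> K" "x \<in> carrier G"
  shows "frob_circ G K H y x = y \<otimes> x"
  using frob_circ_factorized[OF assms(1) H.one_closed, of x] assms K.subset by auto

lemma frob_circ_complement: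
  assumes "h \<in> H"
  shows "frob_circ G K H h x = h \<otimes> x \<otimes> inv h"
  using frob_circ_factorized[OF K.one_closed assms, of x] assms H.subset by auto

lemma not_separates_iff:
  assumes "u \<in> K" "v \<in> K" "z \<in> K"
  shows "\<not> separates G K H z u v \<longleftrightarrow> (\<exists>h\<in>H. v \<otimes> z = h \<otimes> (u \<otimes> z) \<otimes> inv h)"
  using assms K.subset
  by (auto simp: separates_def frob_circ_kernel frob_circ_complement)

definition conj_orbit :: "'a \<Rightarrow> 'a set" where
  "conj_orbit x = (\<lambda>h. h \<otimes> x \<otimes> inv h) ` H"

lemma conj_orbit_subset:
  assumes "x \<in> K - {\<one>}"
  shows "conj_orbit x \<subseteq> K - {\<one>}"
proof
  fix y assume "y \<in> conj_orbit x"
  then obtain h where h: "h \<in> H" and y: "y = h \<otimes> x \<otimes> inv h" unfolding conj_orbit_def by auto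
  have c: "h \<in> carrier G" "x \<in> carrier G" using h assms H.subset K.subset by auto
  have "y \<in> K" using y K.inv_op_closed2[OF c(1)] assms by auto
  moreover have "y \<noteq> \<one>"
  proof
    assume "y = \<one>"
    then have "inv h \<otimes> (h \<otimes> x \<otimes> inv h) \<otimes> h = \<one>" using y c by simp
    then have "x = \<one>" using c by (simp add: m_assoc)
    with assms show False by simp
  qed
  ultimately show "y \<in> K - {\<one>}" by simp
qed

lemma conj_orbit_disjoint:
  assumes "x \<in> carrier G" "y \<in> carrier G" "y \<notin> conj_orbit x"
  shows "conj_orbit x \<inter> conj_orbit y = {}"
proof (rule ccontr)
  assume "conj_orbit x \<inter> conj_orbit y \<noteq> {}"
  then obtain h h' where hh: "h \<in> H" "h' \<in> H" and eq: "h \<otimes> x \<otimes> inv h = h' \<otimes> y \<otimes> inv h'"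
    unfolding conj_orbit_def by auto
  have c: "h \<in> carrier G" "h' \<in> carrier G" using hh H.subset by auto
  define k where "k = inv h' \<otimes> h"
  have "k \<in> H" unfolding k_def using hh by simp
  have "k \<otimes> x \<otimes> inv k = inv h' \<otimes> (h \<otimes> x \<otimes> inv h) \<otimes> h'"
    unfolding k_def using c assms by (simp add: m_assoc inv_mult_group)
  also have "\<dots> = y" unfolding eq using c assms by (simp add: m_assoc)
  finally have "y \<in> conj_orbit x" unfolding conj_orbit_def using \<open>k \<in> H\<close> by blast
  with assms show False by simp
qed

end

locale frobenius_complement = semidirect_decomposition +
  assumes centralizer_trivial: "\<lbrakk>h \<in> H; x \<in> K; h \<otimes> x = x \<otimes> h\<rbrakk> \<Longrightarrow> h = \<one> \<or> x = \<one>"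
begin

text \<open>At most one element of \<open>K\<close> conjugates a given \<open>p\<close> to a given nontrivial \<open>k \<in> H\<close>:
  two such elements differ by an element of \<open>K\<close> centralizing \<open>k\<close>.\<close>
lemma kernel_conjugator_unique:
  assumes k: "k \<in> H" "k \<noteq> \<one>" and p: "p \<in> carrier G" and z: "z \<in> K" "z' \<in> K"
    and conj: "inv z \<otimes> p \<otimes> z = k" "inv z' \<otimes> p \<otimes> z' = k"
  shows "z = z'"
proof -
  have c: "z \<in> carrier G" "z' \<in> carrier G" "k \<in> carrier G" using z k K.subset H.subset by auto
  have unconj: "p = w \<otimes> k \<otimes> inv w" if "w \<in> carrier G" "inv w \<otimes> p \<otimes> w = k" for w
    using that p by (simp add: that(2)[symmetric] m_assoc)
  have p_eq: "p = z \<otimes> k \<otimes> inv z" "p = z' \<otimes> k \<otimes> inv z'"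
    using unconj c conj by auto
  define x where "x = inv z' \<otimes> z"
  have "x \<otimes> k = inv z' \<otimes> (z \<otimes> k \<otimes> inv z) \<otimes> z" unfolding x_def using c by (simp add: m_assoc)
  also have "\<dots> = k \<otimes> x" unfolding x_def by (subst p_eq(1)[symmetric], subst p_eq(2)) (simp add: c m_assoc)
  finally have "x = \<one>" using centralizer_trivial[OF k(1)] k(2) z unfolding x_def by auto
  then show ?thesis unfolding x_def using c by (metis inv_equality inv_inv inv_closed)
qed

text \<open>For \<open>h \<in> H - {\<one>}\<close> the equation \<open>v z = h (u z) h\<inverse>\<close> has at most one solution
  \<open>z \<in> K\<close>: it says that \<open>z\<close> conjugates \<open>(h u)\<inverse> v\<close> to \<open>h\<inverse>\<close>.\<close>
lemma conj_equation_solution_unique: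
  assumes h: "h \<in> H" "h \<noteq> \<one>" and uv: "u \<in> carrier G" "v \<in> carrier G"
    and z: "z \<in> K" "v \<otimes> z = h \<otimes> (u \<otimes> z) \<otimes> inv h"
    and z': "z' \<in> K" "v \<otimes> z' = h \<otimes> (u \<otimes> z') \<otimes> inv h"
  shows "z = z'"
proof -
  have hc: "h \<in> carrier G" using h H.subset by auto
  define p where "p = inv (h \<otimes> u) \<otimes> v"
  have conj: "inv w \<otimes> p \<otimes> w = inv h" if w: "w \<in> K" "v \<otimes> w = h \<otimes> (u \<otimes> w) \<otimes> inv h" for w
  proof -
    have wc: "w \<in> carrier G" using w K.subset by auto
    have "p \<otimes> w = inv (h \<otimes> u) \<otimes> (v \<otimes> w)" unfolding p_def using hc uv wc by (simp add: m_assoc)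
    also have "\<dots> = w \<otimes> inv h" unfolding w(2) using hc uv wc by (simp add: m_assoc inv_mult_group)
    finally have "p \<otimes> w = w \<otimes> inv h" .
    then have "inv w \<otimes> (p \<otimes> w) = inv h" using hc wc by simp
    then show ?thesis using wc hc uv unfolding p_def by (simp add: m_assoc)
  qed
  have "inv h \<in> H" "inv h \<noteq> \<one>" using h hc by auto
  moreover have "p \<in> carrier G" unfolding p_def using hc uv by simp
  ultimately show ?thesis using kernel_conjugator_unique conj z z' by blast
qed

lemma card_non_separating:
  assumes fin: "finite K" "finite H" and uv: "u \<in> K" "v \<in> K" "u \<noteq> v"
  shows "card {z \<in> K. \<not> separates G K H z u v} \<le> card H - 1"
proof -
  have uvc: "u \<in> carrier G" "v \<in> carrier G" using uv K.subset by auto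
  define S where "S h = {z \<in> K. v \<otimes> z = h \<otimes> (u \<otimes> z) \<otimes> inv h}" for h
  have cover: "{z \<in> K. \<not> separates G K H z u v} \<subseteq> (\<Union>h\<in>H - {\<one>}. S h)"
  proof
    fix z assume "z \<in> {z \<in> K. \<not> separates G K H z u v}"
    then obtain h where z: "z \<in> K" and h: "h \<in> H" and eq: "v \<otimes> z = h \<otimes> (u \<otimes> z) \<otimes> inv h"
      using not_separates_iff uv by blast
    have "h \<noteq> \<one>"
    proof
      assume "h = \<one>"
      with eq z uvc have "v \<otimes> z = u \<otimes> z" using K.subset by (auto simp: m_assoc)
      with z uvc uv(3) show False using K.subset by auto
    qed
    with z h eq show "z \<in> (\<Union>h\<in>H - {\<one>}. S h)" unfolding S_def by auto
  qed
  have S_le_1: "card (S h) \<le> 1" if "h \<in> H - {\<one>}" for h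
  proof -
    have "finite (S h)" using fin(1) unfolding S_def by simp
    moreover have "\<forall>z\<in>S h. \<forall>z'\<in>S h. z = z'"
      using that uvc conj_equation_solution_unique unfolding S_def by blast
    ultimately show ?thesis using card_le_Suc0_iff_eq by (metis One_nat_def)
  qed
  have "card {z \<in> K. \<not> separates G K H z u v} \<le> card (\<Union>h\<in>H - {\<one>}. S h)"
    using cover fin(1) by (intro card_mono finite_subset[OF _ fin(1)]) (auto simp: S_def)
  also have "\<dots> \<le> (\<Sum>h\<in>H - {\<one>}. card (S h))" using fin(2) by (intro card_UN_le) simp
  also have "\<dots> \<le> (\<Sum>h\<in>H - {\<one>}. 1)" using S_le_1 by (intro sum_mono) auto
  also have "\<dots> = card H - 1" using fin(2) by simp
  finally show ?thesis .
qed

text \<open>\<open>H\<close> acts freely by conjugation on \<open>K - {\<one>}\<close>: every orbit has \<open>|H|\<close> elements.\<close>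
lemma card_conj_orbit:
  assumes x: "x \<in> K - {\<one>}"
  shows "card (conj_orbit x) = card H"
  unfolding conj_orbit_def
proof (rule card_image, rule inj_onI)
  fix h h' assume hh: "h \<in> H" "h' \<in> H" and eq: "h \<otimes> x \<otimes> inv h = h' \<otimes> x \<otimes> inv h'"
  have c: "h \<in> carrier G" "h' \<in> carrier G" "x \<in> carrier G" using hh x H.subset K.subset by auto
  define k where "k = inv h' \<otimes> h"
  have "k \<in> H" unfolding k_def using hh by simp
  have "k \<otimes> x = inv h' \<otimes> (h \<otimes> x \<otimes> inv h) \<otimes> h" unfolding k_def using c by (simp add: m_assoc)
  also have "\<dots> = x \<otimes> k" unfolding eq k_def using c by (simp add: m_assoc)
  finally have "k = \<one>" using centralizer_trivial[OF \<open>k \<in> H\<close>] x by auto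
  then show "h = h'" unfolding k_def using c by (metis inv_equality inv_inv inv_closed)
qed

text \<open>Consequence (2): unless \<open>|H| = |K| - 1\<close> there are two disjoint orbits in \<open>K - {\<one>}\<close>.\<close>
lemma double_complement_order_bound:
  assumes fin: "finite K" and x: "x \<in> K - {\<one>}" and order: "card H \<noteq> card K - 1"
  shows "2 * card H \<le> card K - 1"
proof -
  have card_K1: "card (K - {\<one>}) = card K - 1" using fin by simp
  have "conj_orbit x \<noteq> K - {\<one>}" using card_conj_orbit[OF x] card_K1 order by metis
  then obtain y where y: "y \<in> K - {\<one>}" "y \<notin> conj_orbit x"
    using conj_orbit_subset[OF x] by blast
  have sub: "conj_orbit x \<union> conj_orbit y \<subseteq> K - {\<one>}"
    using conj_orbit_subset x y by auto
  have "card (conj_orbit x \<union> conj_orbit y) = card (conj_orbit x) + card (conj_orbit y)"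
    using conj_orbit_disjoint[OF _ _ y(2)] x y K.subset sub fin
    by (intro card_Un_disjoint) (auto intro: finite_subset)
  moreover have "card (conj_orbit x \<union> conj_orbit y) \<le> card (K - {\<one>})"
    using sub fin by (intro card_mono) auto
  ultimately show ?thesis using card_conj_orbit x y(1) card_K1 by simp
qed

theorem separating_majority:
  assumes fin: "finite K" "finite H" and order: "card H \<noteq> card K - 1"
    and uv: "u \<in> K" "v \<in> K" "u \<noteq> v"
  shows "real (card {z \<in> K. separates G K H z u v}) > real (card K) / 2"
proof -
  obtain x where x: "x \<in> K - {\<one>}" using uv by blast
  have split: "card {z \<in> K. separates G K H z u v} + card {z \<in> K. \<not> separates G K H z u v} = card K"
    using fin(1) by (subst card_Un_disjoint[symmetric]) (auto intro: arg_cong[where f = card])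
  have "card H \<ge> 1" using fin(2) H.one_closed by (metis One_nat_def Suc_leI card_gt_0_iff empty_iff)
  with split card_non_separating[OF fin uv] double_complement_order_bound[OF fin(1) x order]
  show ?thesis by linarith
qed

end


text \<open>The centralizer condition holds in a Frobenius action: if \<open>h\<close> fixes \<open>\<omega>\<close> and commutes
  with a nontrivial kernel element \<open>x\<close>, then \<open>h\<close> also fixes \<open>x \<omega> \<noteq> \<omega>\<close>, so \<open>h = \<one>\<close>.\<close>
lemma frobenius_centralizer_trivial:
  assumes frob: "frobenius_action G E \<phi>" and \<omega>: "\<omega> \<in> E"
    and h: "h \<in> stabilizer G \<phi> \<omega>" and x: "x \<in> frobenius_kernel G E \<phi>"
    and comm: "h \<otimes>\<^bsub>G\<^esub> x = x \<otimes>\<^bsub>G\<^esub> h"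
  shows "h = \<one>\<^bsub>G\<^esub> \<or> x = \<one>\<^bsub>G\<^esub>"
proof (rule ccontr)
  assume nontrivial: "\<not> (h = \<one>\<^bsub>G\<^esub> \<or> x = \<one>\<^bsub>G\<^esub>)"
  have act: "group_action G E \<phi>" and finE: "finite E"
    and few_fixed: "\<And>g. g \<in> carrier G \<Longrightarrow> g \<noteq> \<one>\<^bsub>G\<^esub> \<Longrightarrow> card (invariants E \<phi> g) \<le> 1"
    using frob unfolding frobenius_action_def transitive_action_def by auto
  have hc: "h \<in> carrier G" and h\<omega>: "\<phi> h \<omega> = \<omega>" using h unfolding stabilizer_def by auto
  have xc: "x \<in> carrier G" and x_free: "invariants E \<phi> x = {}"
    using x nontrivial unfolding frobenius_kernel_def by auto
  have x\<omega>: "\<phi> x \<omega> \<in> E" "\<phi> x \<omega> \<noteq> \<omega>"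
    using group_action.element_image[OF act xc \<omega>] x_free \<omega> unfolding invariants_def by auto
  have "\<phi> h (\<phi> x \<omega>) = \<phi> (h \<otimes>\<^bsub>G\<^esub> x) \<omega>" using group_action.composition_rule[OF act \<omega> hc xc] by simp
  also have "\<dots> = \<phi> x (\<phi> h \<omega>)" using comm group_action.composition_rule[OF act \<omega> xc hc] by simp
  finally have "{\<omega>, \<phi> x \<omega>} \<subseteq> invariants E \<phi> h" using h\<omega> x\<omega> \<omega> unfolding invariants_def by auto
  then have "card {\<omega>, \<phi> x \<omega>} \<le> card (invariants E \<phi> h)"
    using finE by (intro card_mono) (auto simp: invariants_def)
  with few_fixed[OF hc] nontrivial x\<omega>(2) show False by simp
qed

theorem lemma3:
  fixes G :: "('a, 'c) monoid_scheme" and E :: "'b set" and \<phi> :: "'a \<Rightarrow> 'b \<Rightarrow> 'b"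
    and \<omega> :: 'b and K H :: "'a set" and u v :: 'a
  assumes "group G"
    and "frobenius_action G E \<phi>"
    and "\<omega> \<in> E"
    and "K = frobenius_kernel G E \<phi>"
    and "H = stabilizer G \<phi> \<omega>"
    and "K \<lhd> G"
    and "K \<inter> H = {\<one>\<^bsub>G\<^esub>}"
    and "K <#>\<^bsub>G\<^esub> H = carrier G"
    and "card H \<noteq> card K - 1"
    and "u \<in> K" and "v \<in> K" and "u \<noteq> v"
  shows "real (card {z \<in> K. separates G K H z u v}) > real (card K) / 2"
proof -
  have act: "group_action G E \<phi>" and fin: "finite (carrier G)"
    using assms(2) unfolding frobenius_action_def transitive_action_def by auto
  have "subgroup H G" using group_action.stabilizer_subgroup[OF act assms(3)] assms(5) by simp
  then interpret frobenius_complement G K H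
    using assms(1,6,7) frobenius_centralizer_trivial[OF assms(2,3)] assms(4,5)
    by (intro frobenius_complement.intro semidirect_decomposition.intro
        semidirect_decomposition_axioms.intro frobenius_complement_axioms.intro) auto
  have "finite K" "finite H" using fin K.subset H.subset finite_subset by auto
  then show ?thesis using separating_majority assms(9-12) by blast
qed

end
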